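(* Let $P$ be a finite $(3+1)$-free poset, $C,D$ chains of $P$, and $H$ a ladder of $(C,D)$. Then (i) $H$, as an induced subgraph of $\mathrm{inc}_P(C,D)$, is either a 4-cycle or a path; and (ii) $|H\cap C|$ and $|H\cap D|$ differ by at most 1.
   Context: $a\sim_Pb$ means $a,b$ incomparable or equal. For chains $C,D$ of $P$ (not necessarily disjoint), $\mathrm{inc}_P(C,D)$ is the bipartite graph with partite sets $C$ and $D$ (taken as a disjoint union) whose edges are pairs $c\in C$, $d\in D$ with $c\sim_Pd$. A ladder of $(C,D)$ is a connected component of $\mathrm{inc}_P(C,D)$, identified with its vertex set in $C\sqcup D$. $(3+1)$-free: no induced 3-chain plus disjoint point. *)

theory Defs
  imports Main
begin

definition poset_on :: "'a set \<Rightarrow> ('a \<Rightarrow> 'a \<Rightarrow> bool) \<Rightarrow> bool" where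
  "poset_on P le \<longleftrightarrow>
     (\<forall>x\<in>P. le x x) \<and>
     (\<forall>x\<in>P. \<forall>y\<in>P. le x y \<and> le y x \<longrightarrow> x = y) \<and>
     (\<forall>x\<in>P. \<forall>y\<in>P. \<forall>z\<in>P. le x y \<and> le y z \<longrightarrow> le x z)"

definition incomparable :: "('a \<Rightarrow> 'a \<Rightarrow> bool) \<Rightarrow> 'a \<Rightarrow> 'a \<Rightarrow> bool" where
  "incomparable le a b \<longleftrightarrow> \<not> le a b \<and> \<not> le b a"

definition sim :: "('a \<Rightarrow> 'a \<Rightarrow> bool) \<Rightarrow> 'a \<Rightarrow> 'a \<Rightarrow> bool" where
  "sim le a b \<longleftrightarrow> a = b \<or> incomparable le a b"

definition chain_of :: "'a set \<Rightarrow> ('a \<Rightarrow> 'a \<Rightarrow> bool) \<Rightarrow> 'a set \<Rightarrow> bool" where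
  "chain_of P le C \<longleftrightarrow> C \<subseteq> P \<and> (\<forall>x\<in>C. \<forall>y\<in>C. le x y \<or> le y x)"

definition free_3_1 :: "'a set \<Rightarrow> ('a \<Rightarrow> 'a \<Rightarrow> bool) \<Rightarrow> bool" where
  "free_3_1 P le \<longleftrightarrow>
     \<not> (\<exists>a\<in>P. \<exists>b\<in>P. \<exists>c\<in>P. \<exists>d\<in>P.
          le a b \<and> a \<noteq> b \<and> le b c \<and> b \<noteq> c \<and>
          incomparable le d a \<and> incomparable le d b \<and> incomparable le d c)"

text \<open>The bipartite graph inc_P(C,D): vertex set is the disjoint union C \<sqinter> D (as Inl/Inr).\<close>
definition inc_vertices :: "'a set \<Rightarrow> 'a set \<Rightarrow> ('a + 'a) set" where
  "inc_vertices C D = Inl ` C \<union> Inr ` D"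

definition inc_edge :: "('a \<Rightarrow> 'a \<Rightarrow> bool) \<Rightarrow> 'a set \<Rightarrow> 'a set \<Rightarrow> ('a + 'a) \<Rightarrow> ('a + 'a) \<Rightarrow> bool" where
  "inc_edge le C D u v \<longleftrightarrow>
     (\<exists>c\<in>C. \<exists>d\<in>D. sim le c d \<and>
        ((u = Inl c \<and> v = Inr d) \<or> (u = Inr d \<and> v = Inl c)))"

definition ladder :: "('a \<Rightarrow> 'a \<Rightarrow> bool) \<Rightarrow> 'a set \<Rightarrow> 'a set \<Rightarrow> ('a + 'a) set \<Rightarrow> bool" where
  "ladder le C D H \<longleftrightarrow>
     (\<exists>v\<in>inc_vertices C D. H = {w. (v, w) \<in> {(x, y). inc_edge le C D x y}\<^sup>*})"

definition is_path_graph :: "'v set \<Rightarrow> ('v \<Rightarrow> 'v \<Rightarrow> bool) \<Rightarrow> bool" where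
  "is_path_graph H E \<longleftrightarrow>
     (\<exists>xs. xs \<noteq> [] \<and> distinct xs \<and> set xs = H \<and>
        (\<forall>i<length xs. \<forall>j<length xs. E (xs ! i) (xs ! j) \<longleftrightarrow> (i = j + 1 \<or> j = i + 1)))"

definition is_4cycle :: "'v set \<Rightarrow> ('v \<Rightarrow> 'v \<Rightarrow> bool) \<Rightarrow> bool" where
  "is_4cycle H E \<longleftrightarrow>
     (\<exists>xs. length xs = 4 \<and> distinct xs \<and> set xs = H \<and>
        (\<forall>i<4. \<forall>j<4. E (xs ! i) (xs ! j) \<longleftrightarrow> (j = (i + 1) mod 4 \<or> i = (j + 1) mod 4)))"

end

theory Submission
  imports Defs
begin

text \<open>By \<open>(3 + 1)\<close>-freeness every vertex of \<open>inc\<^sub>P(C, D)\<close> has degree at most 2, so a finite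
  connected component is spanned by a path and is either a path or a cycle. The graph is bipartite
  with sides \<open>C\<close> and \<open>D\<close>, so the spanning path alternates between them, which bounds the difference
  of the two sides by 1, and a cycle has even length at least 4. A longer cycle is excluded by
  looking at the least element of \<open>D\<close> on it.\<close>

definition component :: "('v \<Rightarrow> 'v \<Rightarrow> bool) \<Rightarrow> 'v \<Rightarrow> 'v set" where
  "component E v = {w. (v, w) \<in> {(x, y). E x y}\<^sup>*}"

definition is_cycle_graph :: "'v set \<Rightarrow> ('v \<Rightarrow> 'v \<Rightarrow> bool) \<Rightarrow> bool" where
  "is_cycle_graph H E \<longleftrightarrow>
     (\<exists>xs. length xs \<ge> 3 \<and> distinct xs \<and> set xs = H \<and>
        (\<forall>i<length xs. \<forall>j<length xs.
           E (xs ! i) (xs ! j) \<longleftrightarrow> (j = (i + 1) mod length xs \<or> i = (j + 1) mod length xs)))"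

lemma start_in_component: "v \<in> component E v"
  by (simp add: component_def)

lemma component_closed: "x \<in> component E v \<Longrightarrow> E x y \<Longrightarrow> y \<in> component E v"
  by (auto simp: component_def intro: rtrancl_into_rtrancl)

lemma component_subset:
  assumes closed: "\<And>x y. x \<in> K \<Longrightarrow> E x y \<Longrightarrow> y \<in> K" and "v \<in> K"
  shows "component E v \<subseteq> K"
proof
  fix w assume "w \<in> component E v"
  then have "(v, w) \<in> {(x, y). E x y}\<^sup>*" by (simp add: component_def)
  then show "w \<in> K" by (induction rule: rtrancl_induct) (use \<open>v \<in> K\<close> closed in auto)
qed

lemma component_subset_if_meets:
  assumes sym: "\<And>x y. E x y \<Longrightarrow> E y x"
    and closed: "\<And>x y. x \<in> K \<Longrightarrow> E x y \<Longrightarrow> y \<in> K" and meets: "K \<inter> component E v \<noteq> {}"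
  shows "component E v \<subseteq> K"
proof -
  obtain w where "w \<in> K" "w \<in> component E v" using meets by blast
  have "sym {(x, y). E x y}" by (rule symI) (simp add: sym)
  then have "(w, v) \<in> {(x, y). E x y}\<^sup>*"
    using \<open>w \<in> component E v\<close> sym_rtrancl unfolding component_def sym_def by blast
  then have "v \<in> component E w" by (simp add: component_def)
  moreover have "component E w \<subseteq> K" by (rule component_subset) (fact closed, fact)
  ultimately have "v \<in> K" by blast
  then show ?thesis by (rule component_subset[rotated]) (fact closed)
qed

locale max_degree_2_graph =
  fixes E :: "'v \<Rightarrow> 'v \<Rightarrow> bool"
  assumes sym: "E x y \<Longrightarrow> E y x"
    and irrefl: "\<not> E x x"
    and degree_le_2: "E x a \<Longrightarrow> E x b \<Longrightarrow> E x c \<Longrightarrow> a = b \<or> a = c \<or> b = c"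
begin

lemma path_interior_neighbour:
  assumes "distinct xs" "successively E xs" "0 < i" "Suc i < length xs" "E (xs ! i) y"
  shows "y = xs ! (i - 1) \<or> y = xs ! Suc i"
proof -
  have "E (xs ! i) (xs ! (i - 1))"
    using sym[OF successively_nth[OF assms(2), of "i - 1"]] assms(3,4) by simp
  moreover have "E (xs ! i) (xs ! Suc i)" using successively_nth assms(2,4) by blast
  moreover have "xs ! (i - 1) \<noteq> xs ! Suc i" using assms(1,3,4) by (simp add: nth_eq_iff_index_eq)
  ultimately show ?thesis using degree_le_2 assms(5) by blast
qed

lemma path_chord:
  assumes "distinct xs" "successively E xs" "i < j" "j < length xs" "j \<noteq> i + 1"
    and "E (xs ! i) (xs ! j)"
  shows "i = 0 \<and> j = length xs - 1"
proof (rule conjI; rule ccontr)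
  assume "i \<noteq> 0"
  then have "xs ! j = xs ! (i - 1) \<or> xs ! j = xs ! Suc i"
    using path_interior_neighbour[OF assms(1,2) _ _ assms(6)] assms(3,4) by simp
  then show False using assms(1,3-5) by (auto simp: nth_eq_iff_index_eq)
next
  assume "j \<noteq> length xs - 1"
  then have "xs ! i = xs ! (j - 1) \<or> xs ! i = xs ! Suc j"
    using path_interior_neighbour[OF assms(1,2) _ _ sym[OF assms(6)]] assms(3,4) by auto
  then show False using \<open>j \<noteq> length xs - 1\<close> assms(1,3-5) by (auto simp: nth_eq_iff_index_eq)
qed

lemma path_adjacency:
  assumes "distinct xs" "successively E xs" "i < length xs" "j < length xs"
  shows "E (xs ! i) (xs ! j) \<longleftrightarrow> (i = j + 1 \<or> j = i + 1) \<or>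
    E (hd xs) (last xs) \<and> (i = 0 \<and> j = length xs - 1 \<or> j = 0 \<and> i = length xs - 1)"
    (is "_ \<longleftrightarrow> ?step \<or> E (hd xs) (last xs) \<and> ?ends")
proof -
  have ne: "xs \<noteq> []" using assms(3) by auto
  have step: "E (xs ! i) (xs ! j)" if ?step
    using that
  proof
    assume "i = j + 1"
    then show ?thesis using sym[OF successively_nth[OF assms(2), of j]] assms(3) by simp
  next
    assume "j = i + 1"
    then show ?thesis using successively_nth[OF assms(2), of i] assms(4) by simp
  qed
  have chord: ?ends if "E (xs ! i) (xs ! j)" "\<not> ?step"
  proof (cases "i < j")
    case True then show ?thesis using path_chord[OF assms(1,2) True assms(4)] that by auto
  next
    case False
    then have "j < i" using irrefl that(1) by (cases "i = j") auto
    then show ?thesis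
      using path_chord[OF assms(1,2) \<open>j < i\<close> assms(3) _ sym[OF that(1)]] that(2) by auto
  qed
  have ends: "E (xs ! i) (xs ! j) \<longleftrightarrow> E (hd xs) (last xs)" if ?ends
  proof -
    have "hd xs = xs ! 0" "last xs = xs ! (length xs - 1)"
      using ne by (simp_all add: hd_conv_nth last_conv_nth)
    then show ?thesis
      using that sym[of "xs ! 0" "xs ! (length xs - 1)"] sym[of "xs ! (length xs - 1)" "xs ! 0"]
      by auto
  qed
  show ?thesis using step chord ends by blast
qed

lemma path_closed_if_ends_closed:
  assumes "distinct xs" "successively E xs"
    and hd_closed: "\<And>y. E (hd xs) y \<Longrightarrow> y \<in> set xs"
    and last_closed: "\<And>y. E (last xs) y \<Longrightarrow> y \<in> set xs"
    and "x \<in> set xs" "E x y"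
  shows "y \<in> set xs"
proof -
  obtain i where i: "i < length xs" "x = xs ! i" using \<open>x \<in> set xs\<close> by (auto simp: in_set_conv_nth)
  consider "i = 0" | "i = length xs - 1" | "0 < i" "Suc i < length xs" using i by linarith
  then show ?thesis
  proof cases
    case 1 then show ?thesis using hd_closed i assms(6) by (simp add: hd_conv_nth)
  next
    case 2
    moreover have "xs \<noteq> []" using i by auto
    ultimately have "x = last xs" using i by (simp add: last_conv_nth)
    then show ?thesis using last_closed assms(6) by blast
  next
    case 3
    then have "y = xs ! (i - 1) \<or> y = xs ! Suc i"
      using path_interior_neighbour[OF assms(1,2)] i assms(6) by blast
    then show ?thesis using 3 by auto
  qed
qed

text \<open>A longest path inside the component cannot be extended at either end, so by the degree
  bound its vertex set is closed under adjacency and hence exhausts the component.\<close>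
lemma component_spanning_path:
  assumes fin: "finite (component E v)"
  obtains xs where "distinct xs" "set xs = component E v" "successively E xs"
proof -
  define H where "H = component E v"
  define is_path where "is_path xs \<longleftrightarrow> distinct xs \<and> set xs \<subseteq> H \<and> successively E xs" for xs
  have "is_path [v]" by (simp add: is_path_def H_def start_in_component)
  moreover have "length ys < card H + 1" if "is_path ys" for ys
    using that card_mono[OF fin[folded H_def]] distinct_card[of ys] unfolding is_path_def
    by (metis le_imp_less_Suc Suc_eq_plus1)
  ultimately obtain xs where xs: "is_path xs" and longest: "\<And>ys. is_path ys \<Longrightarrow> length ys \<le> length xs"
    using ex_has_greatest_nat[of is_path "[v]" length "card H + 1"] by blast
  then have path: "distinct xs" "set xs \<subseteq> H" "successively E xs" by (simp_all add: is_path_def)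
  have ne: "xs \<noteq> []" using longest[OF \<open>is_path [v]\<close>] by auto
  have in_H: "y \<in> H" if "x \<in> set xs" "E x y" for x y
  proof -
    have "x \<in> H" using path(2) that(1) by blast
    then show ?thesis using component_closed[of x E v y] that(2) unfolding H_def by simp
  qed
  have hd_closed: "y \<in> set xs" if "E (hd xs) y" for y
  proof (rule ccontr)
    assume "y \<notin> set xs"
    then have "is_path (y # xs)"
      using path ne in_H[OF hd_in_set[OF ne] that] sym[OF that]
      by (simp add: is_path_def successively_Cons)
    then show False using longest by fastforce
  qed
  have last_closed: "y \<in> set xs" if "E (last xs) y" for y
  proof (rule ccontr)
    assume "y \<notin> set xs"
    then have "is_path (xs @ [y])"
      using path ne in_H[OF last_in_set[OF ne] that] that
      by (simp add: is_path_def successively_append_iff)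
    then show False using longest by fastforce
  qed
  have "H \<subseteq> set xs"
    unfolding H_def
  proof (rule component_subset_if_meets)
    show "E y x" if "E x y" for x y using sym that .
    show "y \<in> set xs" if "x \<in> set xs" "E x y" for x y
      by (rule path_closed_if_ends_closed[OF path(1,3) _ _ that]) (fact hd_closed last_closed)+
    show "set xs \<inter> component E v \<noteq> {}" using path(2) ne unfolding H_def by (simp add: Int_absorb2)
  qed
  with path show ?thesis using that unfolding H_def by blast
qed

lemma component_subset_square:
  assumes "E a c" "E a d" "E b c" "E b d" "a \<noteq> b" "c \<noteq> d" "a \<in> component E v"
  shows "component E v \<subseteq> {a, b, c, d}"
proof (rule component_subset_if_meets)
  show "E y x" if "E x y" for x y using sym that .
  show "{a, b, c, d} \<inter> component E v \<noteq> {}" using assms(7) by blast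
  show "y \<in> {a, b, c, d}" if "x \<in> {a, b, c, d}" "E x y" for x y
  proof -
    have "E c a" "E c b" "E d a" "E d b" using assms(1-4) by (simp_all add: sym)
    with assms(1-6) that show ?thesis by (blast dest: degree_le_2)
  qed
qed

lemma finite_component_path_or_cycle:
  assumes "finite (component E v)"
  shows "is_path_graph (component E v) E \<or> is_cycle_graph (component E v) E"
proof -
  obtain xs where xs: "distinct xs" "set xs = component E v" "successively E xs"
    using component_spanning_path assms by blast
  define n where "n = length xs"
  have ne: "xs \<noteq> []" using xs(2) start_in_component by fastforce
  note adjacency = path_adjacency[OF xs(1,3), folded n_def]
  show ?thesis
  proof (cases "3 \<le> n \<and> E (hd xs) (last xs)")
    case True
    have "E (xs ! i) (xs ! j) \<longleftrightarrow> j = (i + 1) mod n \<or> i = (j + 1) mod n" if "i < n" "j < n" for i j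
    proof -
      have "(i + 1) mod n = (if i = n - 1 then 0 else i + 1)"
        "(j + 1) mod n = (if j = n - 1 then 0 else j + 1)"
        using that by (auto simp: mod_if)
      then show ?thesis using adjacency[OF that] True that by auto
    qed
    then have "is_cycle_graph (component E v) E"
      unfolding is_cycle_graph_def using True xs(1,2) by (auto simp: n_def intro!: exI[of _ xs])
    then show ?thesis ..
  next
    case False
    have "E (xs ! i) (xs ! j) \<longleftrightarrow> i = j + 1 \<or> j = i + 1" if "i < n" "j < n" for i j
    proof
      assume "E (xs ! i) (xs ! j)"
      moreover have "i \<noteq> j" using irrefl calculation by auto
      ultimately show "i = j + 1 \<or> j = i + 1" using adjacency[OF that] False by auto
    qed (use adjacency[OF that] in auto)
    then have "is_path_graph (component E v) E"
      unfolding is_path_graph_def using ne xs(1,2) by (auto simp: n_def intro!: exI[of _ xs])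
    then show ?thesis ..
  qed
qed

end

lemma cycle_graph_two_neighbours:
  assumes "is_cycle_graph H E" "x \<in> H"
  shows "\<exists>a b. a \<noteq> b \<and> E x a \<and> E x b"
proof -
  obtain xs where xs: "length xs \<ge> 3" "distinct xs" "set xs = H"
    and adj: "\<And>i j. i < length xs \<Longrightarrow> j < length xs \<Longrightarrow>
       E (xs ! i) (xs ! j) \<longleftrightarrow> (j = (i + 1) mod length xs \<or> i = (j + 1) mod length xs)"
    using assms(1) unfolding is_cycle_graph_def by blast
  define n where "n = length xs"
  have n3: "3 \<le> n" and n_pred: "Suc (n - Suc 0) = n" using xs(1) by (simp_all add: n_def)
  obtain i where i: "i < n" "x = xs ! i" using assms(2) xs(3) by (auto simp: in_set_conv_nth n_def)
  define pred where "pred = (if i = 0 then n - 1 else i - 1)"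
  define succ where "succ = (if i = n - 1 then 0 else i + 1)"
  have bounds: "pred < n" "succ < n" and "pred \<noteq> succ"
    using i n3 by (auto simp: pred_def succ_def)
  moreover have "i = (pred + 1) mod n" "succ = (i + 1) mod n"
    using i n3 n_pred by (auto simp: pred_def succ_def)
  then have "E x (xs ! pred)" "E x (xs ! succ)"
    using adj[of i pred] adj[of i succ] i bounds unfolding n_def by simp_all
  moreover have "xs ! pred \<noteq> xs ! succ"
    using \<open>pred \<noteq> succ\<close> bounds xs(2) unfolding n_def by (simp add: nth_eq_iff_index_eq)
  ultimately show ?thesis by blast
qed

lemma cycle_graph_card_ge_3: "is_cycle_graph H E \<Longrightarrow> 3 \<le> card H"
  unfolding is_cycle_graph_def using distinct_card by fastforce

lemma bipartite_cycle_graph_even_card: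
  fixes f :: "'v \<Rightarrow> bool"
  assumes "is_cycle_graph H E" and bipartite: "\<And>x y. E x y \<Longrightarrow> f x \<noteq> f y"
  shows "even (card H)"
proof -
  obtain xs where xs: "length xs \<ge> 3" "distinct xs" "set xs = H"
    and adj: "\<And>i j. i < length xs \<Longrightarrow> j < length xs \<Longrightarrow>
       E (xs ! i) (xs ! j) \<longleftrightarrow> (j = (i + 1) mod length xs \<or> i = (j + 1) mod length xs)"
    using assms(1) unfolding is_cycle_graph_def by blast
  define n where "n = length xs"
  have parity: "f (xs ! i) = (f (xs ! 0) = even i)" if "i < n" for i
    using that
  proof (induction i)
    case (Suc i)
    then have "E (xs ! i) (xs ! Suc i)" using adj[of i "Suc i"] by (simp add: n_def)
    then have "f (xs ! i) \<noteq> f (xs ! Suc i)" by (rule bipartite)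
    then show ?case using Suc by auto
  qed simp
  have "xs \<noteq> []" using xs(1) by auto
  then have "E (xs ! (n - 1)) (xs ! 0)" using adj[of "n - 1" 0] by (simp add: n_def)
  then have "f (xs ! (n - 1)) \<noteq> f (xs ! 0)" by (rule bipartite)
  moreover have "n - 1 < n" using xs(1) by (simp add: n_def)
  ultimately have "odd (n - 1)" using parity[of "n - 1"] by auto
  moreover have "card H = n" using xs(2,3) distinct_card n_def by blast
  ultimately show ?thesis using xs(1) n_def by (cases n) auto
qed

lemma is_4cycle_iff: "is_4cycle H E \<longleftrightarrow> is_cycle_graph H E \<and> card H = 4"
proof -
  have "card H = length xs" if "distinct xs" "set xs = H" for xs :: "'a list"
    using that distinct_card by blast
  then show ?thesis unfolding is_4cycle_def is_cycle_graph_def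
    by (intro iffI; elim exE conjE; (intro conjI exI)?) auto
qed

lemma alternating_count:
  assumes "successively (\<lambda>x y. f x \<noteq> f y) xs"
  shows "\<bar>int (length (filter f xs)) - int (length (filter (\<lambda>x. \<not> f x) xs))\<bar> \<le> 1"
  using assms
proof (induction xs rule: induct_list012)
  case (3 x y zs)
  then have "successively (\<lambda>x y. f x \<noteq> f y) zs" by (auto simp: successively_Cons)
  then show ?case using 3 by auto
qed auto

lemma inc_edge_Inl: "inc_edge le C D (Inl c) y \<longleftrightarrow> (\<exists>d. y = Inr d \<and> c \<in> C \<and> d \<in> D \<and> sim le c d)"
  unfolding inc_edge_def by auto

lemma inc_edge_Inr: "inc_edge le C D (Inr d) y \<longleftrightarrow> (\<exists>c. y = Inl c \<and> c \<in> C \<and> d \<in> D \<and> sim le c d)"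
  unfolding inc_edge_def by auto

lemma inc_edge_isl: "inc_edge le C D x y \<Longrightarrow> isl x \<noteq> isl y"
  unfolding inc_edge_def by auto

lemma sim_commute: "sim le a b \<longleftrightarrow> sim le b a"
  unfolding sim_def incomparable_def by auto

lemma incomparable_if_sim_two_chain_elements:
  assumes "chain_of P le X" "a \<in> X" "b \<in> X" "a \<noteq> b" "sim le w a" "sim le w b"
  shows "incomparable le w a"
  using assms unfolding chain_of_def sim_def incomparable_def by metis

text \<open>A common neighbour of two distinct elements of a chain is incomparable to both, so three of
  them would give an induced \<open>3 + 1\<close>.\<close>
lemma no_three_sim_chain_elements:
  assumes fr: "free_3_1 P le" and ch: "chain_of P le X" and "w \<in> P"
    and abc: "a \<in> X" "b \<in> X" "c \<in> X" "a \<noteq> b" "a \<noteq> c" "b \<noteq> c"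
    and sim: "sim le w a" "sim le w b" "sim le w c"
  shows False
proof -
  have inc: "incomparable le w a" "incomparable le w b" "incomparable le w c"
    using incomparable_if_sim_two_chain_elements[OF ch] abc sim by metis+
  have "X \<subseteq> P" using ch by (simp add: chain_of_def)
  then have no_chain: False
    if "x \<in> {a, b, c}" "y \<in> {a, b, c}" "z \<in> {a, b, c}"
      and "le x y" "le y z" "x \<noteq> y" "y \<noteq> z" "x \<noteq> z" for x y z
    using fr that inc abc(1-3) \<open>w \<in> P\<close> unfolding free_3_1_def by blast
  have "le a b \<or> le b a" "le b c \<or> le c b" "le a c \<or> le c a"
    using ch abc unfolding chain_of_def by auto
  then show False
    using no_chain[of a b c] no_chain[of a c b] no_chain[of b a c] no_chain[of b c a]
      no_chain[of c a b] no_chain[of c b a] abc(4-6) by blast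
qed

lemma max_degree_2_graph_inc_edge:
  assumes "free_3_1 P le" "chain_of P le C" "chain_of P le D"
  shows "max_degree_2_graph (inc_edge le C D)"
proof
  show "inc_edge le C D y x" if "inc_edge le C D x y" for x y
    using that unfolding inc_edge_def by auto
  show "\<not> inc_edge le C D x x" for x
    unfolding inc_edge_def by auto
  show "a = b \<or> a = c \<or> b = c"
    if edges: "inc_edge le C D x a" "inc_edge le C D x b" "inc_edge le C D x c" for x a b c
  proof (cases x)
    case (Inl w)
    then obtain a' b' c' where "a = Inr a'" "b = Inr b'" "c = Inr c'" "a' \<in> D" "b' \<in> D" "c' \<in> D"
      "w \<in> C" "sim le w a'" "sim le w b'" "sim le w c'"
      using edges by (auto simp: inc_edge_Inl)
    moreover have "w \<in> P" using assms(2) \<open>w \<in> C\<close> by (auto simp: chain_of_def)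
    ultimately show ?thesis using no_three_sim_chain_elements[OF assms(1,3), of w a' b' c'] by auto
  next
    case (Inr w)
    then obtain a' b' c' where "a = Inl a'" "b = Inl b'" "c = Inl c'" "a' \<in> C" "b' \<in> C" "c' \<in> C"
      "w \<in> D" "sim le w a'" "sim le w b'" "sim le w c'"
      using edges by (auto simp: inc_edge_Inr sim_commute)
    moreover have "w \<in> P" using assms(3) \<open>w \<in> D\<close> by (auto simp: chain_of_def)
    ultimately show ?thesis using no_three_sim_chain_elements[OF assms(1,2), of w a' b' c'] by auto
  qed
qed

lemma finite_chain_has_least:
  assumes "poset_on P le" "chain_of P le X" "finite A" "A \<noteq> {}" "A \<subseteq> X"
  shows "\<exists>m\<in>A. \<forall>y\<in>A. le m y"
  using assms(3-5)
proof (induction A rule: finite_ne_induct)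
  case (singleton x)
  then show ?case using assms(1,2) by (auto simp: poset_on_def chain_of_def)
next
  case (insert x A)
  then obtain m where m: "m \<in> A" "\<forall>y\<in>A. le m y" by auto
  have "le x m \<or> le m x" using assms(2) insert.prems m(1) by (auto simp: chain_of_def)
  then show ?case
  proof
    assume "le x m"
    then have "\<forall>y\<in>A. le x y"
      using m assms insert.prems unfolding poset_on_def chain_of_def
      by (meson insert_subset subsetD)
    then show ?thesis using assms(1,2) insert.prems by (auto simp: poset_on_def chain_of_def)
  next
    assume "le m x"
    then show ?thesis using m by auto
  qed
qed

lemma sim_cross_of_common_lower_bound:
  assumes po: "poset_on P le" and "chain_of P le C" "c \<in> C" "c' \<in> C" "d \<in> P" "e \<in> P" "e' \<in> P"
    and "le d e" "le d e'"
    and "incomparable le c d" "incomparable le c' d" "incomparable le c e" "incomparable le c' e'"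
  shows "sim le c e' \<or> sim le c' e"
proof (rule ccontr)
  assume "\<not> (sim le c e' \<or> sim le c' e)"
  then have cmp: "le c e' \<or> le e' c" "le c' e \<or> le e c'" by (auto simp: sim_def incomparable_def)
  have trans: "le x z" if "x \<in> P" "y \<in> P" "z \<in> P" "le x y" "le y z" for x y z
    using po that unfolding poset_on_def by blast
  have "c \<in> P" "c' \<in> P" using assms(2-4) by (auto simp: chain_of_def)
  then have "le c e'" "le c' e"
    using cmp trans[of d e' c] trans[of d e c'] assms(5-11) by (auto simp: incomparable_def)
  moreover have "le c c' \<or> le c' c" using assms(2-4) by (auto simp: chain_of_def)
  ultimately show False
    using trans[of c c' e] trans[of c' c e'] \<open>c \<in> P\<close> \<open>c' \<in> P\<close> assms(6,7,12,13)
    by (auto simp: incomparable_def)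
qed

lemma least_Inr_in_component:
  assumes po: "poset_on P le" and cD: "chain_of P le D"
    and fin: "finite (component (inc_edge le C D) v)"
    and nonisolated: "\<And>x. x \<in> component (inc_edge le C D) v \<Longrightarrow> \<exists>y. inc_edge le C D x y"
  obtains d where "Inr d \<in> component (inc_edge le C D) v"
    and "\<And>e. Inr e \<in> component (inc_edge le C D) v \<Longrightarrow> le d e"
proof -
  define H where "H = component (inc_edge le C D) v"
  define A where "A = Inr -` H"
  have "A \<subseteq> D"
  proof
    fix d assume "d \<in> A"
    then obtain y where "inc_edge le C D (Inr d) y" using nonisolated unfolding A_def H_def by auto
    then show "d \<in> D" by (auto simp: inc_edge_Inr)
  qed
  moreover have "A \<noteq> {}"
  proof -
    obtain y where y: "inc_edge le C D v y" using nonisolated[OF start_in_component] by blast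
    then have "y \<in> H" unfolding H_def by (rule component_closed[OF start_in_component])
    with y show ?thesis
      using inc_edge_isl[OF y] start_in_component[of v]
      by (cases v; cases y) (auto simp: A_def H_def)
  qed
  moreover have "finite A" unfolding A_def H_def using fin by (rule finite_vimageI) simp
  ultimately obtain d where "d \<in> A" "\<forall>e\<in>A. le d e"
    using finite_chain_has_least[OF po cD] by blast
  then show ?thesis using that unfolding A_def H_def by simp
qed

text \<open>Let \<open>d\<close> be the least element of \<open>D\<close> in the component, \<open>c, c'\<close> its neighbours and \<open>e, e'\<close>
  their other neighbours. Both \<open>e\<close> and \<open>e'\<close> lie above \<open>d\<close>, so \<open>e \<noteq> e'\<close> would make \<open>c\<close> comparable
  to \<open>e'\<close> and \<open>c'\<close> to \<open>e\<close>, which is impossible; hence \<open>c, c', d, e\<close> span a 4-cycle, and this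
  is the whole component.\<close>
lemma card_component_inc_edge_le_4:
  assumes po: "poset_on P le" and fr: "free_3_1 P le"
    and cC: "chain_of P le C" and cD: "chain_of P le D"
    and fin: "finite (component (inc_edge le C D) v)"
    and two: "\<And>x. x \<in> component (inc_edge le C D) v \<Longrightarrow>
      \<exists>a b. a \<noteq> b \<and> inc_edge le C D x a \<and> inc_edge le C D x b"
  shows "card (component (inc_edge le C D) v) \<le> 4"
proof -
  interpret max_degree_2_graph "inc_edge le C D"
    using fr cC cD by (rule max_degree_2_graph_inc_edge)
  define H where "H = component (inc_edge le C D) v"
  obtain d where dH: "Inr d \<in> H" and least: "\<And>e. Inr e \<in> H \<Longrightarrow> le d e"
    using least_Inr_in_component[OF po cD fin] two unfolding H_def by metis
  obtain a b where "a \<noteq> b" "inc_edge le C D (Inr d) a" "inc_edge le C D (Inr d) b"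
    using two dH unfolding H_def by blast
  then obtain c c' where cc': "c \<noteq> c'" "c \<in> C" "c' \<in> C" "d \<in> D" "sim le c d" "sim le c' d"
    and edges_d: "inc_edge le C D (Inl c) (Inr d)" "inc_edge le C D (Inl c') (Inr d)"
    by (auto simp: inc_edge_Inr inc_edge_Inl)
  have cH: "Inl c \<in> H" "Inl c' \<in> H"
    using component_closed[OF dH[unfolded H_def]] sym[OF edges_d(1)] sym[OF edges_d(2)]
    unfolding H_def by blast+
  have other_neighbour: "\<exists>e. e \<noteq> d \<and> e \<in> D \<and> sim le z e \<and> inc_edge le C D (Inl z) (Inr e)"
    if zH: "Inl z \<in> H" for z
  proof -
    obtain p q where "p \<noteq> q" "inc_edge le C D (Inl z) p" "inc_edge le C D (Inl z) q"
      using two[OF zH[unfolded H_def]] by blast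
    then show ?thesis unfolding inc_edge_Inl by (metis sum.inject(2))
  qed
  obtain e where e: "e \<noteq> d" "e \<in> D" "sim le c e"
    and edge_e: "inc_edge le C D (Inl c) (Inr e)"
    using other_neighbour[OF cH(1)] by blast
  obtain e' where e': "e' \<noteq> d" "e' \<in> D" "sim le c' e'"
    and edge_e': "inc_edge le C D (Inl c') (Inr e')"
    using other_neighbour[OF cH(2)] by blast
  have "e = e'"
  proof (rule ccontr)
    assume "e \<noteq> e'"
    have "\<not> sim le c e'"
    proof
      assume "sim le c e'"
      then have "inc_edge le C D (Inl c) (Inr e')" using cc'(2) e'(2) by (simp add: inc_edge_Inl)
      then show False using degree_le_2[OF edges_d(1) edge_e] e(1) e'(1) \<open>e \<noteq> e'\<close> by blast
    qed
    moreover have "\<not> sim le c' e"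
    proof
      assume "sim le c' e"
      then have "inc_edge le C D (Inl c') (Inr e)" using cc'(3) e(2) by (simp add: inc_edge_Inl)
      then show False using degree_le_2[OF edges_d(2) edge_e'] e(1) e'(1) \<open>e \<noteq> e'\<close> by blast
    qed
    moreover have "Inr e \<in> H" "Inr e' \<in> H"
      using component_closed[OF cH(1)[unfolded H_def] edge_e]
        component_closed[OF cH(2)[unfolded H_def] edge_e'] unfolding H_def .
    then have "le d e" "le d e'" by (simp_all add: least)
    moreover have "incomparable le c d" "incomparable le c e"
      "incomparable le c' d" "incomparable le c' e'"
      using incomparable_if_sim_two_chain_elements[OF cD] cc'(4-6) e e' by metis+
    moreover have "d \<in> P" "e \<in> P" "e' \<in> P" using cD cc'(4) e(2) e'(2) by (auto simp: chain_of_def)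
    ultimately show False using sim_cross_of_common_lower_bound[OF po cC cc'(2,3)] by blast
  qed
  have "H \<subseteq> {Inr d, Inr e, Inl c, Inl c'}"
    unfolding H_def
  proof (rule component_subset_square)
    show "inc_edge le C D (Inr d) (Inl c)" "inc_edge le C D (Inr d) (Inl c')"
      "inc_edge le C D (Inr e) (Inl c)" "inc_edge le C D (Inr e) (Inl c')"
      using edges_d edge_e edge_e' \<open>e = e'\<close> by (simp_all add: sym)
    show "Inr d \<noteq> Inr e" "Inl c \<noteq> Inl c'" using e(1) cc'(1) by simp_all
    show "Inr d \<in> component (inc_edge le C D) v" using dH unfolding H_def .
  qed
  then have "card H \<le> card {Inr d, Inr e, Inl c, Inl c'}" by (rule card_mono[rotated]) simp
  also have "\<dots> \<le> 4" by (simp add: card_insert_if)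
  finally show ?thesis unfolding H_def .
qed

lemma ladder_4cycle_or_path:
  assumes po: "poset_on P le" and fr: "free_3_1 P le"
    and cC: "chain_of P le C" and cD: "chain_of P le D"
    and fin: "finite (component (inc_edge le C D) v)"
  shows "is_4cycle (component (inc_edge le C D) v) (inc_edge le C D) \<or>
    is_path_graph (component (inc_edge le C D) v) (inc_edge le C D)"
proof -
  interpret max_degree_2_graph "inc_edge le C D"
    using fr cC cD by (rule max_degree_2_graph_inc_edge)
  have "is_4cycle (component (inc_edge le C D) v) (inc_edge le C D)"
    if cycle: "is_cycle_graph (component (inc_edge le C D) v) (inc_edge le C D)"
  proof -
    have "card (component (inc_edge le C D) v) \<le> 4"
      using card_component_inc_edge_le_4[OF po fr cC cD fin] cycle_graph_two_neighbours[OF cycle] .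
    moreover have "even (card (component (inc_edge le C D) v))"
      using cycle inc_edge_isl by (rule bipartite_cycle_graph_even_card)
    moreover have "3 \<le> card (component (inc_edge le C D) v)"
      using cycle by (rule cycle_graph_card_ge_3)
    ultimately show ?thesis using cycle is_4cycle_iff by fastforce
  qed
  then show ?thesis using finite_component_path_or_cycle[OF fin] by blast
qed

lemma ladder_sides_card_diff_le_1:
  assumes fr: "free_3_1 P le" and cC: "chain_of P le C" and cD: "chain_of P le D"
    and fin: "finite (component (inc_edge le C D) v)"
    and sub: "component (inc_edge le C D) v \<subseteq> inc_vertices C D"
  shows "\<bar>int (card (component (inc_edge le C D) v \<inter> Inl ` C)) -
    int (card (component (inc_edge le C D) v \<inter> Inr ` D))\<bar> \<le> 1"
proof -
  interpret max_degree_2_graph "inc_edge le C D"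
    using fr cC cD by (rule max_degree_2_graph_inc_edge)
  obtain xs where xs: "distinct xs" "set xs = component (inc_edge le C D) v"
    and path: "successively (inc_edge le C D) xs"
    using component_spanning_path[OF fin] .
  have "successively (\<lambda>x y. isl x \<noteq> isl y) xs"
    using path by (rule successively_mono) (rule inc_edge_isl)
  moreover have "component (inc_edge le C D) v \<inter> Inl ` C = {x. isl x} \<inter> set xs"
    "component (inc_edge le C D) v \<inter> Inr ` D = {x. \<not> isl x} \<inter> set xs"
    using sub xs(2) by (auto simp: inc_vertices_def)
  ultimately show ?thesis using alternating_count distinct_length_filter[OF xs(1)] by metis
qed

theorem mainTheorem13:
  fixes P :: "'a set" and le :: "'a \<Rightarrow> 'a \<Rightarrow> bool"
    and C D :: "'a set" and H :: "('a + 'a) set"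
  assumes "finite P" and "poset_on P le" and "free_3_1 P le"
    and "chain_of P le C" and "chain_of P le D"
    and "ladder le C D H"
  shows "(is_4cycle H (inc_edge le C D) \<or> is_path_graph H (inc_edge le C D)) \<and>
         \<bar>int (card (H \<inter> Inl ` C)) - int (card (H \<inter> Inr ` D))\<bar> \<le> 1"
proof -
  obtain v where v: "v \<in> inc_vertices C D" and H: "H = component (inc_edge le C D) v"
    using assms(6) unfolding ladder_def component_def by blast
  have sub: "H \<subseteq> inc_vertices C D"
    unfolding H by (rule component_subset[OF _ v]) (auto simp: inc_edge_def inc_vertices_def)
  have "C \<subseteq> P" "D \<subseteq> P" using assms(4,5) by (simp_all add: chain_of_def)
  then have "finite (inc_vertices C D)"
    using assms(1) by (auto simp: inc_vertices_def intro: finite_subset)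
  then have fin: "finite (component (inc_edge le C D) v)"
    using sub H finite_subset by blast
  show ?thesis
    using ladder_4cycle_or_path[OF assms(2-5) fin] ladder_sides_card_diff_le_1[OF assms(3-5) fin]
      sub unfolding H by blast
qed

end
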